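(* Consider the district heating network optimal control problem $\mathcal{OCP}_T(x_0)$ described in the context, where the functions $d$, $r$, $p$ are bounded on $[0,\infty)$. Suppose $\mathcal{OCP}_T(x_0)$ exhibits a time-varying exact turnpike with respect to some $\bar z\in Z^{1,1}([0,\infty),\mathrm{int}(\mathcal Z))$ (an infinite-horizon pair satisfying the dynamics and input constraints). If $\bar z$ is bounded, then $\mathcal{OCP}_T(x_0)$ is strictly dissipative with respect to $\bar z$, and this holds for every $\alpha$ of class $\mathcal K$.
   Context: Network model: $\mathcal{G}=(\mathcal{V},\mathcal{E})$ is a connected directed graph with vertices $\mathcal V=\{v_1,\dots,v_n\}$, $n\ge 2$; an edge $e=(u,v)$, $u\ne v$, is oriented in the direction of water flow and carries a constant mass flow $q_e>0$. Each vertex has a heat loss coefficient $\kappa_v>0$ (masses and heat capacity normalized to $1$, ambient temperature $0$). $A_L$ is the weighted flow Laplacian of $\mathcal G$ with weights $q_e$, and $A=-A_L-\mathrm{diag}([\kappa_v]_{v\in\mathcal V})$. There are $m$ producers $\mathcal P\subset\mathcal V$ and $w$ consumers $\mathcal D\subset\mathcal V\setminus\mathcal P$; $B\in\mathbb{R}^{n\times m}$ has $(B)_{ij}=1$ if $v_i$ is the $j$-th producer and $0$ otherwise, and $E\in\mathbb{R}^{n\times w}$ analogously for consumers. Dynamics: $\dot x=Ax+Bu+Ed(t)$, $x(0)=x_0\in\mathcal X_0$, $\mathcal X_0\subset\mathbb{R}^n$ compact. Inputs lie in the box $\mathcal U=\prod_{i=1}^m[(u_{\min})_i,(u_{\max})_i]\subset\mathbb{R}^m_{\ge0}$;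 $\mathcal Z=\mathbb{R}^n\times\mathcal U$. Stage cost $\ell(\tau,x,u)=\tfrac12x^\top Qx+u^\top Sx+x^\top r(\tau)+u^\top p(\tau)$ with $Q$ symmetric, $S\in\mathbb{R}^{m\times n}$, $r:[0,\infty)\to\mathbb{R}^n$, $p:[0,\infty)\to\mathbb{R}^m$. $\mathcal{OCP}_T(x_0)$: minimize $\int_0^T\ell(\tau,x(\tau),u(\tau))d\tau$ over $u\in L^1([0,T],\mathcal U)$ subject to the dynamics; optimal pairs are $z_T^\star(\cdot;x_0)=(x_T^\star,u_T^\star)$. $Z^{1,1}(I,\mathcal R_1\times\mathcal R_2)$ denotes pairs $(x,u)$ with $x\in W^{1,1}$, $u\in L^1$ on $I$. Strict dissipativity: with $\ell_{\bar z}(\tau,z)=\ell(\tau,z)-\ell(\tau,\bar z(\tau))$, $\mathcal{OCP}_T(x_0)$ is strictly dissipative with respect to $\bar z$ (for a given class-$\mathcal K$ function $\alpha$, i.e. continuous, monotonically increasing, $\alpha(0)=0$) if there exists a storage function $\mathcal S:\mathbb{R}\times\mathbb{R}^n\to\mathbb{R}_{\ge s}$, $s\ge0$, such that for all $x_0\in\mathcal X_0$, $T\ge0$ and along all optimal pairs: $\mathcal S(T,x_T^\star(T))-\mathcal S(0,x_0)\le\int_0^T\big(-\alpha(\|z_T^\star(\tau,x_0)-\bar z(\tau)\|)+\ell_{\bar z}(\tau,z_T^\star(\tau,x_0))\big)d\tau$. Exact turnpike: with $\Theta_T(\varepsilon)=\{\tau\in[0,T]:\|z_T^\star(\tau,x_0)-\bar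 z(\tau)\|>\varepsilon\}$, the problem exhibits a time-varying exact turnpike with respect to $\bar z$ if there is $\nu:[0,\infty)\to[0,\infty)$ such that for all $x_0\in\mathcal X_0$, all $T>0$ and all optimal $u_T^\star$, $\mu(\Theta_T(\varepsilon))\le\nu(\varepsilon)<\infty$ for all $\varepsilon\ge0$, in particular for $\varepsilon=0$ ($\mu$ Lebesgue measure). *)

theory Defs
  imports "HOL-Analysis.Analysis"
begin

text \<open>Vertices are indexed by the finite type 'n, producers by 'm, consumers by 'w.
  The flow network is encoded by q u v = mass flow on edge (u,v) (q u v > 0 iff (u,v) is an edge).\<close>

definition flow_edges :: "('n \<Rightarrow> 'n \<Rightarrow> real) \<Rightarrow> ('n \<times> 'n) set" where
  "flow_edges q = {(u, v). 0 < q u v}"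

text \<open>Weighted flow Laplacian: row v collects the in-flowing edges (u,v), so that
  (- A_L x)_v = sum over edges (u,v) of q_(u,v) (x_u - x_v).\<close>
definition flow_laplacian :: "('n::finite \<Rightarrow> 'n \<Rightarrow> real) \<Rightarrow> real^'n^'n" where
  "flow_laplacian q = (\<chi> i j. if i = j then (\<Sum>k\<in>UNIV. q k i) else - q j i)"

definition sys_matrix :: "('n::finite \<Rightarrow> 'n \<Rightarrow> real) \<Rightarrow> ('n \<Rightarrow> real) \<Rightarrow> real^'n^'n" where
  "sys_matrix q \<kappa> = - flow_laplacian q - (\<chi> i j. if i = j then \<kappa> i else 0)"

definition selection_matrix :: "('m::finite \<Rightarrow> 'n::finite) \<Rightarrow> real^'m^'n" where
  "selection_matrix f = (\<chi> i j. if f j = i then 1 else 0)"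

definition stage_cost ::
  "real^'n^'n \<Rightarrow> real^'n^'m \<Rightarrow> (real \<Rightarrow> real^'n) \<Rightarrow> (real \<Rightarrow> real^'m)
   \<Rightarrow> real \<Rightarrow> real^'n \<Rightarrow> real^'m \<Rightarrow> real" where
  "stage_cost Q S r p \<tau> x u =
     (1/2) * (x \<bullet> (Q *v x)) + u \<bullet> (S *v x) + x \<bullet> r \<tau> + u \<bullet> p \<tau>"

definition admissible_pair ::
  "real^'n::finite^'n \<Rightarrow> real^'m::finite^'n \<Rightarrow> real^'w::finite^'n \<Rightarrow> (real \<Rightarrow> real^'w)
   \<Rightarrow> (real^'m) set \<Rightarrow> real^'n \<Rightarrow> real \<Rightarrow> (real \<Rightarrow> real^'n) \<Rightarrow> (real \<Rightarrow> real^'m) \<Rightarrow> bool" where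
  "admissible_pair A B E d U x0 T x u \<longleftrightarrow>
     set_integrable lebesgue {0..T} u \<and> (\<forall>t\<in>{0..T}. u t \<in> U) \<and>
     set_integrable lebesgue {0..T} (\<lambda>s. A *v x s + B *v u s + E *v d s) \<and>
     (\<forall>t\<in>{0..T}. x t = x0 + (LINT s:{0..t}|lebesgue. A *v x s + B *v u s + E *v d s))"

definition cost :: "(real \<Rightarrow> real^'n \<Rightarrow> real^'m \<Rightarrow> real) \<Rightarrow> real
   \<Rightarrow> (real \<Rightarrow> real^'n) \<Rightarrow> (real \<Rightarrow> real^'m) \<Rightarrow> real" where
  "cost l T x u = (LINT \<tau>:{0..T}|lebesgue. l \<tau> (x \<tau>) (u \<tau>))"

definition optimal_pair ::
  "real^'n::finite^'n \<Rightarrow> real^'m::finite^'n \<Rightarrow> real^'w::finite^'n \<Rightarrow> (real \<Rightarrow> real^'w)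
   \<Rightarrow> (real^'m) set \<Rightarrow> (real \<Rightarrow> real^'n \<Rightarrow> real^'m \<Rightarrow> real)
   \<Rightarrow> real^'n \<Rightarrow> real \<Rightarrow> (real \<Rightarrow> real^'n) \<Rightarrow> (real \<Rightarrow> real^'m) \<Rightarrow> bool" where
  "optimal_pair A B E d U l x0 T x u \<longleftrightarrow>
     admissible_pair A B E d U x0 T x u \<and>
     (\<forall>x' u'. admissible_pair A B E d U x0 T x' u' \<longrightarrow> cost l T x u \<le> cost l T x' u')"

definition exact_turnpike ::
  "real^'n::finite^'n \<Rightarrow> real^'m::finite^'n \<Rightarrow> real^'w::finite^'n \<Rightarrow> (real \<Rightarrow> real^'w)
   \<Rightarrow> (real^'m) set \<Rightarrow> (real \<Rightarrow> real^'n \<Rightarrow> real^'m \<Rightarrow> real) \<Rightarrow> (real^'n) set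
   \<Rightarrow> (real \<Rightarrow> real^'n) \<Rightarrow> (real \<Rightarrow> real^'m) \<Rightarrow> bool" where
  "exact_turnpike A B E d U l X0 xb ub \<longleftrightarrow>
     (\<exists>\<nu>::real \<Rightarrow> real. (\<forall>\<epsilon>\<ge>0. 0 \<le> \<nu> \<epsilon>) \<and>
        (\<forall>x0\<in>X0. \<forall>T>0. \<forall>x u. optimal_pair A B E d U l x0 T x u \<longrightarrow>
           (\<forall>\<epsilon>\<ge>0. emeasure lebesgue {\<tau>\<in>{0..T}. norm ((x \<tau>, u \<tau>) - (xb \<tau>, ub \<tau>)) > \<epsilon>}
                     \<le> ennreal (\<nu> \<epsilon>))))"

definition class_K :: "(real \<Rightarrow> real) \<Rightarrow> bool" where
  "class_K \<alpha> \<longleftrightarrow> continuous_on {0..} \<alpha> \<and> mono_on {0..} \<alpha> \<and> \<alpha> 0 = 0"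

definition strictly_dissipative ::
  "real^'n::finite^'n \<Rightarrow> real^'m::finite^'n \<Rightarrow> real^'w::finite^'n \<Rightarrow> (real \<Rightarrow> real^'w)
   \<Rightarrow> (real^'m) set \<Rightarrow> (real \<Rightarrow> real^'n \<Rightarrow> real^'m \<Rightarrow> real) \<Rightarrow> (real^'n) set
   \<Rightarrow> (real \<Rightarrow> real^'n) \<Rightarrow> (real \<Rightarrow> real^'m) \<Rightarrow> (real \<Rightarrow> real) \<Rightarrow> bool" where
  "strictly_dissipative A B E d U l X0 xb ub \<alpha> \<longleftrightarrow>
     (\<exists>S::real \<Rightarrow> real^'n \<Rightarrow> real. \<exists>s\<ge>0. (\<forall>t y. s \<le> S t y) \<and>
        (\<forall>x0\<in>X0. \<forall>T\<ge>0. \<forall>x u. optimal_pair A B E d U l x0 T x u \<longrightarrow>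
           S T (x T) - S 0 x0 \<le>
             (LINT \<tau>:{0..T}|lebesgue. - \<alpha> (norm ((x \<tau>, u \<tau>) - (xb \<tau>, ub \<tau>)))
                 + (l \<tau> (x \<tau>) (u \<tau>) - l \<tau> (xb \<tau>) (ub \<tau>)))))"

end

theory Submission
  imports Defs
begin

(* The exact turnpike property bounds the measure of the set of times at which an optimal
  pair deviates from the reference pair zb by N = nu(0), uniformly in x0 and T. Off this set
  the dissipation integrand -alpha(|z - zb|) + l(z) - l(zb) vanishes. On it, the state error
  e = x - xb obeys |e'| <= L |e| + W; as e vanishes at the last time before t at which the pairs
  agree (or equals x0 - xb(0) if there is none), a Gronwall-type doubling argument over an
  interval of length at most N bounds e uniformly, so the integrand is bounded below by a
  constant -K there. Hence the dissipation integral is at least -K N =: -C for every T > 0,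
  and the storage function that equals C at time 0 and 0 afterwards works for every alpha.
  Only boundedness of the data and the turnpike property enter. *)

(* Integral form of the differential inequality |e'| <= L |e| + W, on every subinterval. *)
definition linear_growth_increments ::
  "(real \<Rightarrow> 'a::real_normed_vector) \<Rightarrow> real \<Rightarrow> real \<Rightarrow> real \<Rightarrow> real \<Rightarrow> bool" where
  "linear_growth_increments e a b L W \<longleftrightarrow>
     (\<forall>s t M. a \<le> s \<longrightarrow> s \<le> t \<longrightarrow> t \<le> b \<longrightarrow> (\<forall>\<tau>\<in>{s..t}. norm (e \<tau>) \<le> M) \<longrightarrow>
        norm (e t - e s) \<le> (t - s) * (L * M + W))"

lemma linear_growth_increments_subset:
  assumes "linear_growth_increments e a b L W" "a \<le> a'" "b' \<le> b"
  shows "linear_growth_increments e a' b' L W"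
  using assms unfolding linear_growth_increments_def by (meson order_trans)

lemma linear_growth_increments_short_interval:
  fixes e :: "real \<Rightarrow> 'a::real_normed_vector"
  assumes cont: "continuous_on {a..t} e" and incr: "linear_growth_increments e a t L W"
    and "L \<ge> 0" "W \<ge> 0" "h \<ge> 0" "h * L \<le> 1/2" "a \<le> t" "t - a \<le> h"
  shows "norm (e t) \<le> 2 * norm (e a) + 2 * h * W"
proof -
  have "continuous_on {a..t} (\<lambda>\<tau>. norm (e \<tau>))"
    using cont by (intro continuous_intros)
  then obtain c where c: "c \<in> {a..t}" and c_max: "\<forall>\<tau>\<in>{a..t}. norm (e \<tau>) \<le> norm (e c)"
    using continuous_attains_sup[of "{a..t}" "\<lambda>\<tau>. norm (e \<tau>)"] \<open>a \<le> t\<close> by auto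
  define M where "M = norm (e c)"
  have "norm (e c - e a) \<le> (c - a) * (L * M + W)"
    using incr c c_max unfolding linear_growth_increments_def M_def by auto
  also have "\<dots> \<le> h * (L * M + W)"
    using c assms by (intro mult_right_mono) (auto simp: M_def)
  also have "\<dots> \<le> M / 2 + h * W"
    using mult_right_mono[OF \<open>h * L \<le> 1/2\<close>, of M] by (simp add: M_def algebra_simps)
  finally have "M \<le> norm (e a) + M / 2 + h * W"
    using norm_triangle_sub[of "e c" "e a"] unfolding M_def by linarith
  moreover have "norm (e t) \<le> M"
    using c_max \<open>a \<le> t\<close> unfolding M_def by auto
  ultimately show ?thesis by linarith
qed

lemma linear_growth_increments_pow2_bound:
  fixes e :: "real \<Rightarrow> 'a::real_normed_vector"
  assumes cont: "continuous_on {a..b} e" and incr: "linear_growth_increments e a b L W"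
    and L: "L \<ge> 0" and W: "W \<ge> 0" and h: "h \<ge> 0" "h * L \<le> 1/2"
  shows "a \<le> t \<Longrightarrow> t \<le> b \<Longrightarrow> t \<le> a + real k * h \<Longrightarrow>
           norm (e t) \<le> 2 ^ k * (norm (e a) + 2 * h * W) - 2 * h * W"
proof (induction k arbitrary: t)
  case 0
  then show ?case by simp
next
  case (Suc k)
  have pow_mono: "(2::real) ^ k * (norm (e a) + 2 * h * W) \<le> 2 ^ Suc k * (norm (e a) + 2 * h * W)"
    using h W by simp
  show ?case
  proof (cases "t \<le> a + real k * h")
    case True
    then have "norm (e t) \<le> 2 ^ k * (norm (e a) + 2 * h * W) - 2 * h * W"
      using Suc.IH Suc.prems by blast
    with pow_mono show ?thesis by linarith
  next
    case False
    define a' where "a' = a + real k * h"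
    have a': "a \<le> a'" "a' \<le> t" "t - a' \<le> h"
      using False Suc.prems h unfolding a'_def by (auto simp: algebra_simps)
    have "norm (e t) \<le> 2 * norm (e a') + 2 * h * W"
    proof (rule linear_growth_increments_short_interval[OF _ _ L W h])
      show "continuous_on {a'..t} e"
        using a' Suc.prems by (auto intro: continuous_on_subset[OF cont])
      show "linear_growth_increments e a' t L W"
        using a' Suc.prems by (auto intro: linear_growth_increments_subset[OF incr])
    qed (use a' in auto)
    moreover have "norm (e a') \<le> 2 ^ k * (norm (e a) + 2 * h * W) - 2 * h * W"
      using Suc.IH a' Suc.prems unfolding a'_def by auto
    ultimately show ?thesis by (simp add: algebra_simps)
  qed
qed

lemma linear_growth_increments_bound:
  fixes e :: "real \<Rightarrow> 'a::real_normed_vector"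
  assumes cont: "continuous_on {a..b} e" and incr: "linear_growth_increments e a b L W"
    and L: "L \<ge> 0" and W: "W \<ge> 0" and "a \<le> b" "b - a \<le> N"
  shows "norm (e b) \<le> 2 ^ nat \<lceil>N * (2 * L + 2)\<rceil> * (norm (e a) + W)"
proof -
  define h where "h = 1 / (2 * L + 2)"
  define k where "k = nat \<lceil>N * (2 * L + 2)\<rceil>"
  have h: "h \<ge> 0" "h * L \<le> 1/2" "2 * h \<le> 1"
    using L unfolding h_def by (auto simp: field_simps)
  have "N \<le> real k * h"
    using L unfolding h_def k_def by (simp add: field_simps) linarith
  then have "norm (e b) \<le> 2 ^ k * (norm (e a) + 2 * h * W) - 2 * h * W"
    using linear_growth_increments_pow2_bound[OF cont incr L W h(1,2)] assms by auto
  also have "\<dots> \<le> 2 ^ k * (norm (e a) + W)"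
  proof -
    have "2 * h * W \<le> W"
      using mult_right_mono[OF h(3) W] by simp
    then have "2 ^ k * (2 * h * W) \<le> 2 ^ k * W"
      by (intro mult_left_mono) auto
    moreover have "0 \<le> 2 * h * W"
      using h W by simp
    ultimately show ?thesis
      unfolding distrib_left by linarith
  qed
  finally show ?thesis unfolding k_def .
qed

lemma continuous_on_last_zero:
  fixes e :: "real \<Rightarrow> 'a::real_normed_vector"
  assumes cont: "continuous_on {a..t} e" and "a \<le> t"
  obtains c where "a \<le> c" "c \<le> t" "c = a \<or> e c = 0" "\<forall>\<tau>\<in>{c<..t}. e \<tau> \<noteq> 0"
proof (cases "\<exists>\<tau>\<in>{a..t}. e \<tau> = 0")
  case False
  with that[of a] \<open>a \<le> t\<close> show ?thesis by auto
next
  case True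
  define Z where "Z = {\<tau>\<in>{a..t}. e \<tau> = 0}"
  have "closed Z"
    unfolding Z_def by (rule continuous_closed_preimage_constant[OF cont]) simp
  moreover have "Z \<noteq> {}" "bdd_above Z"
    using True unfolding Z_def by (auto intro: bdd_aboveI[of _ t])
  ultimately have "Sup Z \<in> Z"
    by (intro closed_contains_Sup)
  moreover have "\<tau> \<notin> Z" if "Sup Z < \<tau>" for \<tau>
    using cSup_upper[OF _ \<open>bdd_above Z\<close>, of \<tau>] that by auto
  ultimately show ?thesis
    using that[of "Sup Z"] unfolding Z_def by fastforce
qed

lemma admissible_pair_integrable_on:
  assumes "admissible_pair A B E d U x0 T x u"
  shows "(\<lambda>s. A *v x s + B *v u s + E *v d s) integrable_on {0..T}"
  using assms set_lebesgue_integral_eq_integral(1) unfolding admissible_pair_def by blast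

lemma admissible_pair_integral_eq:
  assumes "admissible_pair A B E d U x0 T x u" "t \<in> {0..T}"
  shows "x t = x0 + integral {0..t} (\<lambda>s. A *v x s + B *v u s + E *v d s)"
proof -
  let ?F = "\<lambda>s. A *v x s + B *v u s + E *v d s"
  have "set_integrable lebesgue {0..T} ?F"
    using assms(1) by (simp add: admissible_pair_def)
  then have "set_integrable lebesgue {0..t} ?F"
    by (rule set_integrable_subset) (use assms(2) in auto)
  moreover have "x t = x0 + (LINT s:{0..t}|lebesgue. ?F s)"
    using assms by (simp add: admissible_pair_def)
  ultimately show ?thesis
    by (simp add: set_lebesgue_integral_eq_integral(2))
qed

lemma admissible_pair_continuous_on:
  assumes "admissible_pair A B E d U x0 T x u"
  shows "continuous_on {0..T} x"
proof -
  have "continuous_on {0..T} (\<lambda>t. x0 + integral {0..t} (\<lambda>s. A *v x s + B *v u s + E *v d s))"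
    using admissible_pair_integrable_on[OF assms]
    by (intro continuous_intros indefinite_integral_continuous_1)
  then show ?thesis
    using admissible_pair_integral_eq[OF assms] continuous_on_cong by (metis (no_types, lifting))
qed

lemma admissible_pair_input_measurable:
  assumes "admissible_pair A B E d U x0 T x u"
  shows "u \<in> borel_measurable (lebesgue_on {0..T})"
  using assms set_lebesgue_integral_eq_integral(1) integrable_imp_measurable
  unfolding admissible_pair_def by blast

lemma admissible_pair_increment:
  assumes adm: "admissible_pair A B E d U x0 T x u" and "0 \<le> s" "s \<le> t" "t \<le> T"
  shows "x t - x s = integral {s..t} (\<lambda>s. A *v x s + B *v u s + E *v d s)"
proof -
  let ?F = "\<lambda>s. A *v x s + B *v u s + E *v d s"
  have "?F integrable_on {0..t}"
    using admissible_pair_integrable_on[OF adm] assms by (auto intro: integrable_subinterval_real)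
  then have "integral {0..s} ?F + integral {s..t} ?F = integral {0..t} ?F"
    using assms by (intro Henstock_Kurzweil_Integration.integral_combine)
  moreover have "x t = x0 + integral {0..t} ?F" "x s = x0 + integral {0..s} ?F"
    using admissible_pair_integral_eq[OF adm] assms by auto
  ultimately show ?thesis
    by (simp add: algebra_simps)
qed

definition deviation_set ::
  "(real \<Rightarrow> 'a) \<Rightarrow> (real \<Rightarrow> 'b) \<Rightarrow> (real \<Rightarrow> 'a) \<Rightarrow> (real \<Rightarrow> 'b) \<Rightarrow> real \<Rightarrow> real set" where
  "deviation_set x u xb ub T = {\<tau>\<in>{0..T}. (x \<tau>, u \<tau>) \<noteq> (xb \<tau>, ub \<tau>)}"

lemma deviation_set_eq_norm_pos:
  fixes x xb :: "real \<Rightarrow> 'a::real_normed_vector" and u ub :: "real \<Rightarrow> 'b::real_normed_vector"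
  shows "{\<tau>\<in>{0..T}. norm ((x \<tau>, u \<tau>) - (xb \<tau>, ub \<tau>)) > 0} = deviation_set x u xb ub T"
  by (auto simp: deviation_set_def zero_prod_def)

lemma deviation_set_sets_lebesgue:
  fixes x xb :: "real \<Rightarrow> real^'n::finite" and u ub :: "real \<Rightarrow> real^'m::finite"
  assumes "continuous_on {0..T} x" "continuous_on {0..T} xb"
    "u \<in> borel_measurable (lebesgue_on {0..T})" "ub \<in> borel_measurable (lebesgue_on {0..T})"
  shows "deviation_set x u xb ub T \<in> sets lebesgue"
proof -
  have "x \<in> borel_measurable (lebesgue_on {0..T})" "xb \<in> borel_measurable (lebesgue_on {0..T})"
    using assms(1,2) by (auto intro: continuous_imp_measurable_on_sets_lebesgue)
  with assms(3,4) have "{\<tau> \<in> space (lebesgue_on {0..T}). (x \<tau>, u \<tau>) \<noteq> (xb \<tau>, ub \<tau>)}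
      \<in> sets (lebesgue_on {0..T})"
    by measurable
  then show ?thesis
    by (auto simp: deviation_set_def sets_restrict_space_iff)
qed

lemma admissible_pairs_deviation_increments:
  fixes A :: "real^'n::finite^'n" and B :: "real^'m::finite^'n" and E :: "real^'w::finite^'n"
  assumes adm: "admissible_pair A B E d U x0 T x u"
    and adm_b: "admissible_pair A B E d U y0 T xb ub"
    and A_bound: "\<forall>v. norm (A *v v) \<le> norm v * LA" and "LA \<ge> 0"
    and B_bound: "\<forall>\<tau>\<in>{0..T}. norm (B *v (u \<tau> - ub \<tau>)) \<le> W"
  shows "linear_growth_increments (\<lambda>t. x t - xb t) 0 T LA W"
  unfolding linear_growth_increments_def
proof (intro allI impI)
  fix s t M
  assume st: "0 \<le> s" "s \<le> t" "t \<le> T" and M: "\<forall>\<tau>\<in>{s..t}. norm (x \<tau> - xb \<tau>) \<le> M"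
  define F where "F = (\<lambda>s. A *v x s + B *v u s + E *v d s)"
  define Fb where "Fb = (\<lambda>s. A *v xb s + B *v ub s + E *v d s)"
  have "F integrable_on {s..t}" "Fb integrable_on {s..t}"
    using admissible_pair_integrable_on[OF adm] admissible_pair_integrable_on[OF adm_b] st
    unfolding F_def Fb_def by (auto intro: integrable_subinterval_real)
  then have "((\<lambda>\<tau>. F \<tau> - Fb \<tau>) has_integral integral {s..t} F - integral {s..t} Fb) {s..t}"
    by (intro has_integral_diff integrable_integral)
  moreover have "x t - x s = integral {s..t} F" "xb t - xb s = integral {s..t} Fb"
    using admissible_pair_increment[OF adm st] admissible_pair_increment[OF adm_b st]
    unfolding F_def Fb_def by auto
  ultimately have int_diff: "((\<lambda>\<tau>. F \<tau> - Fb \<tau>) has_integral (x t - xb t) - (x s - xb s)) {s..t}"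
    by (simp add: algebra_simps)
  have diff_bound: "norm (F \<tau> - Fb \<tau>) \<le> LA * M + W" if "\<tau> \<in> {s..t}" for \<tau>
  proof -
    have "F \<tau> - Fb \<tau> = A *v (x \<tau> - xb \<tau>) + B *v (u \<tau> - ub \<tau>)"
      unfolding F_def Fb_def by (simp add: algebra_simps)
    then have "norm (F \<tau> - Fb \<tau>) \<le> norm (A *v (x \<tau> - xb \<tau>)) + norm (B *v (u \<tau> - ub \<tau>))"
      by (simp add: norm_triangle_ineq)
    also have "\<dots> \<le> norm (x \<tau> - xb \<tau>) * LA + W"
      using A_bound B_bound that st by (intro add_mono) auto
    also have "\<dots> \<le> M * LA + W"
      using M that \<open>LA \<ge> 0\<close> by (intro add_mono mult_right_mono) auto
    finally show ?thesis by (simp add: algebra_simps)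
  qed
  have "0 \<le> LA * M + W"
    using diff_bound[of s] st by (auto intro: order_trans[OF norm_ge_zero])
  with has_integral_bound_real[OF _ _ int_diff, of "LA * M + W" "{}"] diff_bound
  show "norm (x t - xb t - (x s - xb s)) \<le> (t - s) * (LA * M + W)"
    using st by (simp add: mult.commute)
qed

lemma admissible_pairs_state_deviation_bound:
  fixes A :: "real^'n::finite^'n" and B :: "real^'m::finite^'n" and E :: "real^'w::finite^'n"
  assumes adm: "admissible_pair A B E d U x0 T x u"
    and adm_b: "admissible_pair A B E d U y0 T xb ub"
    and A_bound: "\<forall>v. norm (A *v v) \<le> norm v * LA" and LA: "LA \<ge> 0"
    and B_bound: "\<forall>\<tau>\<in>{0..T}. norm (B *v (u \<tau> - ub \<tau>)) \<le> W" and W: "W \<ge> 0"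
    and N: "N \<ge> 0" and small: "emeasure lebesgue (deviation_set x u xb ub T) \<le> ennreal N"
    and init: "norm (x0 - y0) \<le> \<beta>" and t: "t \<in> {0..T}"
  shows "norm (x t - xb t) \<le> 2 ^ nat \<lceil>N * (2 * LA + 2)\<rceil> * (\<beta> + W)"
proof -
  define e where "e = (\<lambda>\<tau>. x \<tau> - xb \<tau>)"
  have cont: "continuous_on {0..T} e"
    unfolding e_def
    using admissible_pair_continuous_on[OF adm] admissible_pair_continuous_on[OF adm_b]
    by (intro continuous_intros)
  have incr: "linear_growth_increments e 0 T LA W"
    unfolding e_def by (rule admissible_pairs_deviation_increments[OF adm adm_b A_bound LA B_bound])
  obtain c where c: "0 \<le> c" "c \<le> t" "c = 0 \<or> e c = 0" and nonzero: "\<forall>\<tau>\<in>{c<..t}. e \<tau> \<noteq> 0"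
    using continuous_on_last_zero[OF continuous_on_subset[OF cont]] t by auto
  have "x 0 = x0" "xb 0 = y0"
    using admissible_pair_integral_eq[OF adm] admissible_pair_integral_eq[OF adm_b] t by auto
  moreover have "0 \<le> \<beta>"
    using init by (rule order_trans[OF norm_ge_zero])
  ultimately have e_c: "norm (e c) \<le> \<beta>"
    using c init unfolding e_def by (cases "c = 0") auto
  have "{c<..t} \<subseteq> deviation_set x u xb ub T"
    using nonzero c t unfolding deviation_set_def e_def by auto
  moreover have "deviation_set x u xb ub T \<in> sets lebesgue"
    using adm adm_b
    by (intro deviation_set_sets_lebesgue admissible_pair_continuous_on admissible_pair_input_measurable)
  ultimately have "emeasure lebesgue {c<..t} \<le> emeasure lebesgue (deviation_set x u xb ub T)"
    by (rule emeasure_mono)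
  then have "ennreal (t - c) \<le> ennreal N"
    using small c by simp
  then have "t - c \<le> N"
    using N by simp
  then have "norm (e t) \<le> 2 ^ nat \<lceil>N * (2 * LA + 2)\<rceil> * (norm (e c) + W)"
    using c t LA W continuous_on_subset[OF cont] linear_growth_increments_subset[OF incr]
    by (intro linear_growth_increments_bound) auto
  also have "\<dots> \<le> 2 ^ nat \<lceil>N * (2 * LA + 2)\<rceil> * (\<beta> + W)"
    using e_c by simp
  finally show ?thesis
    unfolding e_def .
qed

lemma set_integral_ge_of_bounded_below_on_small_set:
  fixes f :: "real \<Rightarrow> real"
  assumes D: "D \<in> sets lebesgue" "D \<subseteq> {0..T}" and small: "emeasure lebesgue D \<le> ennreal N"
    and "K \<ge> 0" "N \<ge> 0"
    and below_D: "\<forall>\<tau>\<in>D. - K \<le> f \<tau>" and nonneg: "\<forall>\<tau>\<in>{0..T} - D. 0 \<le> f \<tau>"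
  shows "- (K * N) \<le> (LINT \<tau>:{0..T}|lebesgue. f \<tau>)"
proof (cases "set_integrable lebesgue {0..T} f")
  case False
  \<comment> \<open>the integral then has the junk value 0\<close>
  then show ?thesis
    using assms by (simp add: set_lebesgue_integral_def set_integrable_def not_integrable_integral_eq)
next
  case True
  have D_lmeasurable: "D \<in> lmeasurable"
    using D bounded_subset[OF bounded_closed_interval] by (intro bounded_set_imp_lmeasurable) auto
  have "measure lebesgue D \<le> N"
    using small \<open>N \<ge> 0\<close> by (simp add: measure_def enn2real_leI)
  then have "- (K * N) \<le> integral {0..T} (\<lambda>\<tau>. - K * indicat_real D \<tau>)"
    using D D_lmeasurable \<open>K \<ge> 0\<close> by (simp add: integral_indicator Int_absorb2 mult_left_mono)
  also have "\<dots> \<le> integral {0..T} f"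
  proof (rule integral_le)
    have "indicat_real D integrable_on {0..T}"
      using D D_lmeasurable by (simp add: integrable_on_indicator Int_absorb2)
    then show "(\<lambda>\<tau>. - K * indicat_real D \<tau>) integrable_on {0..T}"
      by (rule integrable_on_mult_right)
    show "f integrable_on {0..T}"
      using set_lebesgue_integral_eq_integral(1)[OF True] .
    show "- K * indicat_real D \<tau> \<le> f \<tau>" if "\<tau> \<in> {0..T}" for \<tau>
      using below_D nonneg that by (cases "\<tau> \<in> D") auto
  qed
  also have "\<dots> = (LINT \<tau>:{0..T}|lebesgue. f \<tau>)"
    using set_lebesgue_integral_eq_integral(2)[OF True] by simp
  finally show ?thesis .
qed

lemma set_integral_singleton:
  fixes f :: "real \<Rightarrow> real"
  shows "(LINT \<tau>:{a}|lebesgue. f \<tau>) = 0"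
proof (cases "set_integrable lebesgue {a} f")
  case True
  then show ?thesis
    using set_lebesgue_integral_eq_integral(2)[OF True] by simp
next
  case False
  then show ?thesis
    by (simp add: set_lebesgue_integral_def set_integrable_def not_integrable_integral_eq)
qed

lemma stage_cost_bounded:
  assumes r: "bounded (r ` {0..})" and p: "bounded (p ` {0..})" and "R \<ge> 0"
  obtains K where "K \<ge> 0"
    "\<forall>\<tau>\<ge>0. \<forall>x u. norm x \<le> R \<longrightarrow> norm u \<le> R \<longrightarrow> \<bar>stage_cost Q S r p \<tau> x u\<bar> \<le> K"
proof -
  obtain LQ where LQ: "LQ \<ge> 0" "\<forall>v. norm (Q *v v) \<le> norm v * LQ"
    using bounded_linear.nonneg_bounded[OF matrix_vector_mul_bounded_linear[of Q]] by blast
  obtain LS where LS: "LS \<ge> 0" "\<forall>v. norm (S *v v) \<le> norm v * LS"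
    using bounded_linear.nonneg_bounded[OF matrix_vector_mul_bounded_linear[of S]] by blast
  obtain Rr where Rr: "Rr > 0" "\<forall>\<tau>\<ge>0. norm (r \<tau>) \<le> Rr"
    using r unfolding bounded_pos by auto
  obtain Rp where Rp: "Rp > 0" "\<forall>\<tau>\<ge>0. norm (p \<tau>) \<le> Rp"
    using p unfolding bounded_pos by auto
  have inner_bound: "\<bar>a \<bullet> b\<bar> \<le> R * c" if "norm a \<le> R" "norm b \<le> c" for a b :: "real^'k" and c
    using Cauchy_Schwarz_ineq2[of a b] mult_mono[OF that] \<open>R \<ge> 0\<close> by simp
  define K where "K = (1/2) * (R * (R * LQ)) + R * (R * LS) + R * Rr + R * Rp"
  have "\<bar>stage_cost Q S r p \<tau> x u\<bar> \<le> K" if "\<tau> \<ge> 0" "norm x \<le> R" "norm u \<le> R" for \<tau> x u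
  proof -
    have "norm (Q *v x) \<le> R * LQ" "norm (S *v x) \<le> R * LS"
      using LQ LS that by (auto intro: order_trans mult_right_mono)
    then have "\<bar>x \<bullet> (Q *v x)\<bar> \<le> R * (R * LQ)" "\<bar>u \<bullet> (S *v x)\<bar> \<le> R * (R * LS)"
      "\<bar>x \<bullet> r \<tau>\<bar> \<le> R * Rr" "\<bar>u \<bullet> p \<tau>\<bar> \<le> R * Rp"
      using that Rr Rp by (auto intro: inner_bound)
    then show ?thesis
      unfolding stage_cost_def K_def by linarith
  qed
  moreover have "K \<ge> 0"
    unfolding K_def using \<open>R \<ge> 0\<close> LQ LS Rr Rp by simp
  ultimately show ?thesis
    using that by blast
qed

lemma exact_turnpike_deviation_measure:
  fixes A :: "real^'n::finite^'n" and B :: "real^'m::finite^'n" and E :: "real^'w::finite^'n"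
  assumes "exact_turnpike A B E d U l X0 xb ub"
  obtains N where "N \<ge> 0" "\<forall>x0\<in>X0. \<forall>T>0. \<forall>x u. optimal_pair A B E d U l x0 T x u \<longrightarrow>
      emeasure lebesgue (deviation_set x u xb ub T) \<le> ennreal N"
proof -
  obtain \<nu> :: "real \<Rightarrow> real" where "0 \<le> \<nu> 0"
    and "\<forall>x0\<in>X0. \<forall>T>0. \<forall>x u. optimal_pair A B E d U l x0 T x u \<longrightarrow>
      emeasure lebesgue {\<tau>\<in>{0..T}. norm ((x \<tau>, u \<tau>) - (xb \<tau>, ub \<tau>)) > 0} \<le> ennreal (\<nu> 0)"
    using assms unfolding exact_turnpike_def by (meson order_refl)
  then show ?thesis
    using that[of "\<nu> 0"] unfolding deviation_set_eq_norm_pos by blast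
qed

lemma admissible_pairs_bounded_of_small_deviation:
  fixes A :: "real^'n::finite^'n" and B :: "real^'m::finite^'n" and E :: "real^'w::finite^'n"
  assumes adm: "admissible_pair A B E d U x0 T x u"
    and adm_b: "admissible_pair A B E d U (xb 0) T xb ub"
    and LA: "LA \<ge> 0" "\<forall>v. norm (A *v v) \<le> norm v * LA"
    and LB: "LB \<ge> 0" "\<forall>v. norm (B *v v) \<le> norm v * LB"
    and MU: "MU \<ge> 0" "\<forall>v\<in>U. norm v \<le> MU"
    and N: "N \<ge> 0" "emeasure lebesgue (deviation_set x u xb ub T) \<le> ennreal N"
    and x0: "norm x0 \<le> M0" and xb: "\<forall>\<tau>\<in>{0..T}. norm (xb \<tau>) \<le> Mz"
    and t: "t \<in> {0..T}"
  shows "norm (x t) \<le> 2 ^ nat \<lceil>N * (2 * LA + 2)\<rceil> * (M0 + Mz + 2 * MU * LB) + Mz"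
    and "norm (u t) \<le> MU"
proof -
  have u_U: "u \<tau> \<in> U" "ub \<tau> \<in> U" if "\<tau> \<in> {0..T}" for \<tau>
    using adm adm_b that unfolding admissible_pair_def by auto
  have B_bound: "\<forall>\<tau>\<in>{0..T}. norm (B *v (u \<tau> - ub \<tau>)) \<le> 2 * MU * LB"
  proof
    fix \<tau>
    assume "\<tau> \<in> {0..T}"
    then have "norm (u \<tau>) \<le> MU" "norm (ub \<tau>) \<le> MU"
      using u_U MU(2) by auto
    then have "norm (u \<tau> - ub \<tau>) \<le> 2 * MU"
      using norm_triangle_ineq4[of "u \<tau>" "ub \<tau>"] by linarith
    then show "norm (B *v (u \<tau> - ub \<tau>)) \<le> 2 * MU * LB"
      using order_trans[OF LB(2)[rule_format] mult_right_mono[OF _ LB(1)]] by blast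
  qed
  have "norm (xb 0) \<le> Mz"
    using xb t by auto
  then have init: "norm (x0 - xb 0) \<le> M0 + Mz"
    using x0 norm_triangle_ineq4[of x0 "xb 0"] by linarith
  have "norm (x t - xb t) \<le> 2 ^ nat \<lceil>N * (2 * LA + 2)\<rceil> * (M0 + Mz + 2 * MU * LB)"
    using admissible_pairs_state_deviation_bound[OF adm adm_b LA(2) LA(1) B_bound _ N init t]
      MU(1) LB(1) by simp
  then show "norm (x t) \<le> 2 ^ nat \<lceil>N * (2 * LA + 2)\<rceil> * (M0 + Mz + 2 * MU * LB) + Mz"
    using xb t norm_triangle_sub[of "x t" "xb t"] by fastforce
  show "norm (u t) \<le> MU"
    using u_U(1)[OF t] MU(2) by blast
qed

lemma exact_turnpike_optimal_pairs_bounded: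
  fixes A :: "real^'n::finite^'n" and B :: "real^'m::finite^'n" and E :: "real^'w::finite^'n"
  assumes U: "bounded U" and X0: "bounded X0" and zb: "bounded ((\<lambda>t. (xb t, ub t)) ` {0..})"
    and zb_traj: "\<forall>T\<ge>0. admissible_pair A B E d U (xb 0) T xb ub"
    and turnpike: "exact_turnpike A B E d U l X0 xb ub"
  obtains R where "R \<ge> 0" "\<forall>t\<ge>0. norm (xb t) \<le> R \<and> norm (ub t) \<le> R"
    "\<forall>x0\<in>X0. \<forall>T>0. \<forall>x u. optimal_pair A B E d U l x0 T x u \<longrightarrow>
       (\<forall>t\<in>{0..T}. norm (x t) \<le> R \<and> norm (u t) \<le> R)"
proof -
  obtain N where N: "N \<ge> 0" and small: "\<forall>x0\<in>X0. \<forall>T>0. \<forall>x u. optimal_pair A B E d U l x0 T x u \<longrightarrow>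
      emeasure lebesgue (deviation_set x u xb ub T) \<le> ennreal N"
    using exact_turnpike_deviation_measure[OF turnpike] by blast
  obtain LA where LA: "LA \<ge> 0" "\<forall>v. norm (A *v v) \<le> norm v * LA"
    using bounded_linear.nonneg_bounded[OF matrix_vector_mul_bounded_linear[of A]] by blast
  obtain LB where LB: "LB \<ge> 0" "\<forall>v. norm (B *v v) \<le> norm v * LB"
    using bounded_linear.nonneg_bounded[OF matrix_vector_mul_bounded_linear[of B]] by blast
  obtain MU where MU: "MU > 0" "\<forall>v\<in>U. norm v \<le> MU"
    using U unfolding bounded_pos by blast
  obtain M0 where M0: "M0 > 0" "\<forall>y\<in>X0. norm y \<le> M0"
    using X0 unfolding bounded_pos by blast
  obtain Mz where Mz: "Mz > 0" "\<forall>t\<ge>0. norm (xb t, ub t) \<le> Mz"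
    using zb unfolding bounded_pos by auto
  have zb_bound: "norm (xb t) \<le> Mz" "norm (ub t) \<le> Mz" if "t \<ge> 0" for t
    using Mz(2) that by (meson norm_fst_le norm_snd_le order_trans)+
  define R where "R = 2 ^ nat \<lceil>N * (2 * LA + 2)\<rceil> * (M0 + Mz + 2 * MU * LB) + Mz + MU"
  have "2 ^ nat \<lceil>N * (2 * LA + 2)\<rceil> * (M0 + Mz + 2 * MU * LB) \<ge> 0"
    using M0 Mz MU LB by simp
  then have R: "R \<ge> 0" "Mz \<le> R" "MU \<le> R"
    "2 ^ nat \<lceil>N * (2 * LA + 2)\<rceil> * (M0 + Mz + 2 * MU * LB) + Mz \<le> R"
    using Mz MU unfolding R_def by linarith+
  show ?thesis
  proof (rule that[OF R(1)])
    show "\<forall>t\<ge>0. norm (xb t) \<le> R \<and> norm (ub t) \<le> R"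
      using zb_bound R(2) by (meson order_trans)
    show "\<forall>x0\<in>X0. \<forall>T>0. \<forall>x u. optimal_pair A B E d U l x0 T x u \<longrightarrow>
       (\<forall>t\<in>{0..T}. norm (x t) \<le> R \<and> norm (u t) \<le> R)"
    proof (intro ballI allI impI conjI)
      fix x0 T x u t
      assume x0: "x0 \<in> X0" and T: "T > 0" and opt: "optimal_pair A B E d U l x0 T x u"
        and t: "t \<in> {0..T}"
      have adm: "admissible_pair A B E d U x0 T x u"
        using opt unfolding optimal_pair_def by blast
      have adm_b: "admissible_pair A B E d U (xb 0) T xb ub"
        using zb_traj T by simp
      note bounds = admissible_pairs_bounded_of_small_deviation[OF adm adm_b LA LB less_imp_le[OF MU(1)]
          MU(2) N small[rule_format, OF x0 T opt] _ _ t, of M0 Mz]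
      show "norm (x t) \<le> R" "norm (u t) \<le> R"
        using bounds M0 x0 zb_bound R(3,4) by (auto intro: order_trans)
    qed
  qed
qed

definition dissipation_integral ::
  "(real \<Rightarrow> 'a::real_normed_vector \<Rightarrow> 'b::real_normed_vector \<Rightarrow> real) \<Rightarrow> (real \<Rightarrow> real)
    \<Rightarrow> (real \<Rightarrow> 'a) \<Rightarrow> (real \<Rightarrow> 'b) \<Rightarrow> (real \<Rightarrow> 'a) \<Rightarrow> (real \<Rightarrow> 'b) \<Rightarrow> real \<Rightarrow> real" where
  "dissipation_integral l \<alpha> x u xb ub T =
     (LINT \<tau>:{0..T}|lebesgue. - \<alpha> (norm ((x \<tau>, u \<tau>) - (xb \<tau>, ub \<tau>)))
                             + (l \<tau> (x \<tau>) (u \<tau>) - l \<tau> (xb \<tau>) (ub \<tau>)))"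

lemma dissipation_integral_0: "dissipation_integral l \<alpha> x u xb ub 0 = 0"
  unfolding dissipation_integral_def by (simp add: set_integral_singleton)

lemma dissipation_integrand_lower_bound:
  fixes x xb :: "'a::real_normed_vector" and u ub :: "'b::real_normed_vector"
    and l :: "'t \<Rightarrow> 'a \<Rightarrow> 'b \<Rightarrow> real" and \<alpha> :: "real \<Rightarrow> real"
  assumes \<alpha>: "mono_on {0..} \<alpha>"
    and l: "\<bar>l \<tau> x u\<bar> \<le> K" "\<bar>l \<tau> xb ub\<bar> \<le> K"
    and R: "norm x \<le> R" "norm u \<le> R" "norm xb \<le> R" "norm ub \<le> R"
  shows "- (\<alpha> (4 * R) + 2 * K) \<le> - \<alpha> (norm ((x, u) - (xb, ub))) + (l \<tau> x u - l \<tau> xb ub)"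
proof -
  have "norm ((x, u) - (xb, ub)) \<le> norm (x, u) + norm (xb, ub)"
    by (rule norm_triangle_ineq4)
  also have "\<dots> \<le> (norm x + norm u) + (norm xb + norm ub)"
    by (intro add_mono norm_Pair_le)
  finally have "norm ((x, u) - (xb, ub)) \<le> 4 * R"
    using R by linarith
  then have "\<alpha> (norm ((x, u) - (xb, ub))) \<le> \<alpha> (4 * R)"
    using mono_onD[OF \<alpha>] by simp
  then show ?thesis
    using l by linarith
qed

lemma exact_turnpike_dissipation_integral_lower_bound:
  fixes A :: "real^'n::finite^'n" and B :: "real^'m::finite^'n" and E :: "real^'w::finite^'n"
  assumes U: "bounded U" and X0: "bounded X0" and zb: "bounded ((\<lambda>t. (xb t, ub t)) ` {0..})"
    and zb_traj: "\<forall>T\<ge>0. admissible_pair A B E d U (xb 0) T xb ub"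
    and turnpike: "exact_turnpike A B E d U l X0 xb ub"
    and l_bounded: "\<forall>R\<ge>0. \<exists>K\<ge>0. \<forall>\<tau>\<ge>0. \<forall>x u. norm x \<le> R \<longrightarrow> norm u \<le> R \<longrightarrow> \<bar>l \<tau> x u\<bar> \<le> K"
    and \<alpha>: "mono_on {0..} \<alpha>" "\<alpha> 0 = 0"
  obtains C where "C \<ge> 0" "\<forall>x0\<in>X0. \<forall>T>0. \<forall>x u. optimal_pair A B E d U l x0 T x u \<longrightarrow>
      - C \<le> dissipation_integral l \<alpha> x u xb ub T"
proof -
  obtain N where N: "N \<ge> 0" and small: "\<forall>x0\<in>X0. \<forall>T>0. \<forall>x u. optimal_pair A B E d U l x0 T x u \<longrightarrow>
      emeasure lebesgue (deviation_set x u xb ub T) \<le> ennreal N"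
    using exact_turnpike_deviation_measure[OF turnpike] by blast
  obtain R where R: "R \<ge> 0" and zb_R: "\<forall>t\<ge>0. norm (xb t) \<le> R \<and> norm (ub t) \<le> R"
    and opt_R: "\<forall>x0\<in>X0. \<forall>T>0. \<forall>x u. optimal_pair A B E d U l x0 T x u \<longrightarrow>
       (\<forall>t\<in>{0..T}. norm (x t) \<le> R \<and> norm (u t) \<le> R)"
    using exact_turnpike_optimal_pairs_bounded[OF U X0 zb zb_traj turnpike] by blast
  obtain K where K: "K \<ge> 0" "\<forall>\<tau>\<ge>0. \<forall>x u. norm x \<le> R \<longrightarrow> norm u \<le> R \<longrightarrow> \<bar>l \<tau> x u\<bar> \<le> K"
    using l_bounded R by blast
  define Kf where "Kf = \<alpha> (4 * R) + 2 * K"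
  have "Kf \<ge> 0"
    using mono_onD[OF \<alpha>(1), of 0 "4 * R"] \<alpha>(2) R K(1) unfolding Kf_def by simp
  have "- (Kf * N) \<le> dissipation_integral l \<alpha> x u xb ub T"
    if x0: "x0 \<in> X0" and T: "T > 0" and opt: "optimal_pair A B E d U l x0 T x u" for x0 T x u
    unfolding dissipation_integral_def
  proof (rule set_integral_ge_of_bounded_below_on_small_set)
    have adm: "admissible_pair A B E d U x0 T x u"
      using opt unfolding optimal_pair_def by blast
    have adm_b: "admissible_pair A B E d U (xb 0) T xb ub"
      using zb_traj T by simp
    show "deviation_set x u xb ub T \<in> sets lebesgue"
      using adm adm_b
      by (intro deviation_set_sets_lebesgue admissible_pair_continuous_on admissible_pair_input_measurable)
    show "deviation_set x u xb ub T \<subseteq> {0..T}"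
      unfolding deviation_set_def by blast
    show "emeasure lebesgue (deviation_set x u xb ub T) \<le> ennreal N"
      using small x0 T opt by blast
    have bounds: "norm (x \<tau>) \<le> R" "norm (u \<tau>) \<le> R" "norm (xb \<tau>) \<le> R" "norm (ub \<tau>) \<le> R"
      if "\<tau> \<in> {0..T}" for \<tau>
      using zb_R opt_R x0 T opt that by auto
    show "\<forall>\<tau>\<in>deviation_set x u xb ub T. - Kf \<le> - \<alpha> (norm ((x \<tau>, u \<tau>) - (xb \<tau>, ub \<tau>)))
                                     + (l \<tau> (x \<tau>) (u \<tau>) - l \<tau> (xb \<tau>) (ub \<tau>))"
    proof
      fix \<tau>
      assume "\<tau> \<in> deviation_set x u xb ub T"
      then have "\<tau> \<in> {0..T}"
        unfolding deviation_set_def by blast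
      with bounds K(2) show "- Kf \<le> - \<alpha> (norm ((x \<tau>, u \<tau>) - (xb \<tau>, ub \<tau>)))
                                     + (l \<tau> (x \<tau>) (u \<tau>) - l \<tau> (xb \<tau>) (ub \<tau>))"
        unfolding Kf_def by (intro dissipation_integrand_lower_bound[OF \<alpha>(1)]) auto
    qed
    show "\<forall>\<tau>\<in>{0..T} - deviation_set x u xb ub T. 0 \<le> - \<alpha> (norm ((x \<tau>, u \<tau>) - (xb \<tau>, ub \<tau>)))
                                     + (l \<tau> (x \<tau>) (u \<tau>) - l \<tau> (xb \<tau>) (ub \<tau>))"
      unfolding deviation_set_def using \<alpha>(2) by auto
  qed (use \<open>Kf \<ge> 0\<close> N in auto)
  then show ?thesis
    using that[of "Kf * N"] \<open>Kf \<ge> 0\<close> N by simp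
qed

theorem proposition3:
  fixes q :: "'n::finite \<Rightarrow> 'n \<Rightarrow> real"
    and \<kappa> :: "'n \<Rightarrow> real"
    and prod :: "'m::finite \<Rightarrow> 'n"
    and cons :: "'w::finite \<Rightarrow> 'n"
    and umin umax :: "real^'m"
    and Q :: "real^'n^'n" and S :: "real^'n^'m"
    and r :: "real \<Rightarrow> real^'n" and p :: "real \<Rightarrow> real^'m"
    and d :: "real \<Rightarrow> real^'w"
    and X0 :: "(real^'n) set"
    and xb :: "real \<Rightarrow> real^'n" and ub :: "real \<Rightarrow> real^'m"
  assumes n_ge2: "CARD('n) \<ge> 2"
    and q_nonneg: "\<forall>u v. 0 \<le> q u v"
    and q_noloop: "\<forall>v. q v v = 0"
    and connected: "\<forall>u v. (u, v) \<in> (flow_edges q \<union> (flow_edges q)\<inverse>)\<^sup>*"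
    and kappa_pos: "\<forall>v. 0 < \<kappa> v"
    and prod_inj: "inj prod" and cons_inj: "inj cons"
    and prod_cons_disj: "range prod \<inter> range cons = {}"
    and box: "\<forall>i. 0 \<le> umin $ i \<and> umin $ i \<le> umax $ i"
    and Q_sym: "transpose Q = Q"
    and X0_compact: "compact X0"
    and d_meas: "d \<in> borel_measurable lebesgue" and d_bdd: "bounded (d ` {0..})"
    and r_meas: "r \<in> borel_measurable lebesgue" and r_bdd: "bounded (r ` {0..})"
    and p_meas: "p \<in> borel_measurable lebesgue" and p_bdd: "bounded (p ` {0..})"
    and zb_traj: "\<forall>T\<ge>0. admissible_pair (sys_matrix q \<kappa>) (selection_matrix prod)
                     (selection_matrix cons) d (cbox umin umax) (xb 0) T xb ub"
    and zb_int: "\<forall>t\<ge>0. ub t \<in> interior (cbox umin umax)"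
    and turnpike: "exact_turnpike (sys_matrix q \<kappa>) (selection_matrix prod) (selection_matrix cons)
                     d (cbox umin umax) (stage_cost Q S r p) X0 xb ub"
    and zb_bdd: "bounded ((\<lambda>t. (xb t, ub t)) ` {0..})"
  shows "\<forall>\<alpha>. class_K \<alpha> \<longrightarrow>
           strictly_dissipative (sys_matrix q \<kappa>) (selection_matrix prod) (selection_matrix cons)
             d (cbox umin umax) (stage_cost Q S r p) X0 xb ub \<alpha>"
proof (intro allI impI)
  fix \<alpha> :: "real \<Rightarrow> real"
  assume "class_K \<alpha>"
  then have \<alpha>: "mono_on {0..} \<alpha>" "\<alpha> 0 = 0"
    unfolding class_K_def by auto
  let ?A = "sys_matrix q \<kappa>" and ?B = "selection_matrix prod" and ?E = "selection_matrix cons"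
    and ?U = "cbox umin umax" and ?l = "stage_cost Q S r p"
  have "\<forall>R\<ge>0. \<exists>K\<ge>0. \<forall>\<tau>\<ge>0. \<forall>x u. norm x \<le> R \<longrightarrow> norm u \<le> R \<longrightarrow> \<bar>?l \<tau> x u\<bar> \<le> K"
    using stage_cost_bounded[OF r_bdd p_bdd] by metis
  then obtain C where "C \<ge> 0" and lower_bound: "\<forall>x0\<in>X0. \<forall>T>0. \<forall>x u.
      optimal_pair ?A ?B ?E d ?U ?l x0 T x u \<longrightarrow> - C \<le> dissipation_integral ?l \<alpha> x u xb ub T"
    using exact_turnpike_dissipation_integral_lower_bound[OF bounded_cbox
        compact_imp_bounded[OF X0_compact] zb_bdd zb_traj turnpike _ \<alpha>] by blast
  show "strictly_dissipative ?A ?B ?E d ?U ?l X0 xb ub \<alpha>"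
    unfolding strictly_dissipative_def dissipation_integral_def[symmetric]
    using \<open>C \<ge> 0\<close> lower_bound
    by (intro exI[of _ "\<lambda>t (y::real^'n). if t = 0 then C else 0"] exI[of _ 0])
      (force simp: dissipation_integral_0)
qed

end
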